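(* Let $D$ be a principal ideal domain, $\alpha\in D$ a prime element, $n\ge1$, and $\overline{D}:=D/(\alpha^n)$. Let $1\leqslant j\leqslant r$, let $M$ be a free $\overline{D}$-module with basis $e_1,\dots,e_r$, and let $N=\bigoplus_{i=1}^jx_i\overline{D}$ be a submodule of $M$ (an internal direct sum) with $x_i\in M$ and $\mathrm{Ann}(x_i)=(\alpha^{n_i})/(\alpha^n)\neq\overline{D}$ for $i=1,\dots,j$. Then $M/N\cong\bigoplus_{i=1}^rD/(\alpha^{n-n_i})$, where $n_i:=0$ for $j<i\leq r$. *)

theory Defs
  imports "HOL-Algebra.Algebra"
begin

definition Dbar :: "('a, 'b) ring_scheme \<Rightarrow> 'a \<Rightarrow> nat \<Rightarrow> 'a set ring" where
  "Dbar D \<alpha> n = D Quot (PIdl\<^bsub>D\<^esub> (\<alpha> [^]\<^bsub>D\<^esub> n))"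

definition is_basis :: "('s, 'c) ring_scheme \<Rightarrow> ('s, 'm, 'd) module_scheme \<Rightarrow> (nat \<Rightarrow> 'm) \<Rightarrow> nat \<Rightarrow> bool" where
  "is_basis R M e r \<longleftrightarrow> (\<forall>i\<in>{1..r}. e i \<in> carrier M) \<and>
     (\<forall>m\<in>carrier M. \<exists>!c. c \<in> {1..r} \<rightarrow>\<^sub>E carrier R \<and>
        m = (\<Oplus>\<^bsub>M\<^esub> i\<in>{1..r}. c i \<odot>\<^bsub>M\<^esub> e i))"

definition lin_span :: "('s, 'c) ring_scheme \<Rightarrow> ('s, 'm, 'd) module_scheme \<Rightarrow> (nat \<Rightarrow> 'm) \<Rightarrow> nat \<Rightarrow> 'm set" where
  "lin_span R M x j = {(\<Oplus>\<^bsub>M\<^esub> i\<in>{1..j}. c i \<odot>\<^bsub>M\<^esub> x i) | c. c \<in> {1..j} \<rightarrow> carrier R}"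

definition sum_is_direct :: "('s, 'c) ring_scheme \<Rightarrow> ('s, 'm, 'd) module_scheme \<Rightarrow> (nat \<Rightarrow> 'm) \<Rightarrow> nat \<Rightarrow> bool" where
  "sum_is_direct R M x j \<longleftrightarrow> (\<forall>c \<in> {1..j} \<rightarrow> carrier R.
      (\<Oplus>\<^bsub>M\<^esub> i\<in>{1..j}. c i \<odot>\<^bsub>M\<^esub> x i) = \<zero>\<^bsub>M\<^esub> \<longrightarrow> (\<forall>i\<in>{1..j}. c i \<odot>\<^bsub>M\<^esub> x i = \<zero>\<^bsub>M\<^esub>))"

definition Ann :: "('s, 'c) ring_scheme \<Rightarrow> ('s, 'm, 'd) module_scheme \<Rightarrow> 'm \<Rightarrow> 's set" where
  "Ann R M x = {c \<in> carrier R. c \<odot>\<^bsub>M\<^esub> x = \<zero>\<^bsub>M\<^esub>}"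

text \<open>The image I/J of an ideal I (containing J) in the quotient ring D/J.\<close>
definition quot_ideal :: "('a, 'b) ring_scheme \<Rightarrow> 'a set \<Rightarrow> 'a set \<Rightarrow> 'a set set" where
  "quot_ideal D I J = a_r_coset D J ` I"

text \<open>M/N is isomorphic, as a D-module (D acting on the Dbar-module M through
  the quotient map), to the external direct sum of the D-modules Q i, i = 1..r,
  where Q i = D/K i is given as a quotient ring of D (D acting by multiplication).
  M/N is the set of additive cosets of N, with coset addition and
  d \<cdot> (N + x) = N + (J + d) x.\<close>
definition quot_iso_dsum ::
  "('a, 'b) ring_scheme \<Rightarrow> 'a set \<Rightarrow> ('a set, 'm, 'd) module_scheme \<Rightarrow> 'm set
    \<Rightarrow> nat \<Rightarrow> (nat \<Rightarrow> 'a set) \<Rightarrow> bool" where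
  "quot_iso_dsum D J M N r K \<longleftrightarrow>
    (\<exists>\<phi>. bij_betw \<phi> (A_RCOSETS M N) (PiE {1..r} (\<lambda>i. carrier (D Quot K i))) \<and>
      (\<forall>U\<in>(A_RCOSETS M N). \<forall>V\<in>(A_RCOSETS M N).
         \<phi> (set_add M U V) = (\<lambda>i\<in>{1..r}. ring.add (D Quot K i) (\<phi> U i) (\<phi> V i))) \<and>
      (\<forall>d\<in>carrier D. \<forall>x\<in>carrier M.
         \<phi> (a_r_coset M N (a_r_coset D J d \<odot>\<^bsub>M\<^esub> x)) =
           (\<lambda>i\<in>{1..r}. monoid.mult (D Quot K i) (a_r_coset D (K i) d) (\<phi> (a_r_coset M N x) i))))"

end

theory Submission
  imports Defs
begin

text \<open>
  Write \<open>R = D/(\<alpha>^n)\<close> and \<open>a\<close> for the image of \<open>\<alpha>\<close>. Every element of \<open>R\<close> is a unit or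
  divisible by \<open>a\<close>, \<open>a^n = 0\<close>, and the annihilator of \<open>a^k\<close> is \<open>a^(n-k) R\<close>. Since
  \<open>Ann(x_i) = (a^(n_i))\<close>, each \<open>x_i\<close> is \<open>a^(n-n_i) z_i\<close> for some \<open>z_i \<in> M\<close>, and the directness of
  the sum shows that \<open>z_1, \<dots>, z_j\<close> are linearly independent modulo \<open>aM\<close>. Such a family extends
  to a basis \<open>y\<close> of \<open>M\<close> with \<open>y_i = z_i\<close> for \<open>i \<le> j\<close>, by repeatedly exchanging a basis vector
  whose coefficient is a unit. In this adapted basis \<open>N\<close> consists exactly of the combinations
  \<open>\<Sum> c_i y_i\<close> with \<open>c_i \<in> (a^(n-n_i))\<close>, where \<open>n_i = 0\<close> for \<open>i > j\<close>; hence reducing the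
  \<open>i\<close>-th coordinate modulo \<open>(\<alpha>^(n-n_i))\<close> is a surjective \<open>D\<close>-linear map
  \<open>M \<rightarrow> \<Oplus>_i D/(\<alpha>^(n-n_i))\<close> with kernel \<open>N\<close>.
\<close>

section \<open>Linear combinations and bases\<close>

context module
begin

definition lincomb :: "('i \<Rightarrow> 'a) \<Rightarrow> ('i \<Rightarrow> 'c) \<Rightarrow> 'i set \<Rightarrow> 'c"
  where "lincomb c y S = (\<Oplus>\<^bsub>M\<^esub> i\<in>S. c i \<odot>\<^bsub>M\<^esub> y i)"

lemma lincomb_closed [intro, simp]:
  "c \<in> S \<rightarrow> carrier R \<Longrightarrow> y \<in> S \<rightarrow> carrier M \<Longrightarrow> lincomb c y S \<in> carrier M"
  unfolding lincomb_def by (intro M.finsum_closed) auto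

lemma lincomb_cong:
  "(\<And>i. i \<in> S \<Longrightarrow> c i \<odot>\<^bsub>M\<^esub> y i = d i \<odot>\<^bsub>M\<^esub> z i) \<Longrightarrow> d \<in> S \<rightarrow> carrier R \<Longrightarrow> z \<in> S \<rightarrow> carrier M
   \<Longrightarrow> lincomb c y S = lincomb d z S"
  unfolding lincomb_def by (intro M.finsum_cong') auto

lemma lincomb_zero:
  "(\<And>i. i \<in> S \<Longrightarrow> c i = \<zero>) \<Longrightarrow> y \<in> S \<rightarrow> carrier M \<Longrightarrow> lincomb c y S = \<zero>\<^bsub>M\<^esub>"
  unfolding lincomb_def by (rule M.add.finprod_one_eqI) (auto simp: Pi_iff)

lemma lincomb_add:
  assumes "c \<in> S \<rightarrow> carrier R" "d \<in> S \<rightarrow> carrier R" "y \<in> S \<rightarrow> carrier M"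
  shows "lincomb (\<lambda>i. c i \<oplus> d i) y S = lincomb c y S \<oplus>\<^bsub>M\<^esub> lincomb d y S"
proof -
  have "lincomb (\<lambda>i. c i \<oplus> d i) y S = (\<Oplus>\<^bsub>M\<^esub> i\<in>S. c i \<odot>\<^bsub>M\<^esub> y i \<oplus>\<^bsub>M\<^esub> d i \<odot>\<^bsub>M\<^esub> y i)"
    unfolding lincomb_def using assms by (intro M.finsum_cong') (auto simp: Pi_iff smult_l_distr)
  also have "\<dots> = lincomb c y S \<oplus>\<^bsub>M\<^esub> lincomb d y S"
    unfolding lincomb_def using assms by (intro M.finsum_addf) (auto simp: Pi_iff)
  finally show ?thesis .
qed

lemma lincomb_smult:
  "\<lbrakk>finite S; s \<in> carrier R; c \<in> S \<rightarrow> carrier R; y \<in> S \<rightarrow> carrier M\<rbrakk>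
   \<Longrightarrow> s \<odot>\<^bsub>M\<^esub> lincomb c y S = lincomb (\<lambda>i. s \<otimes> c i) y S"
  unfolding lincomb_def
  by (subst finsum_smult_ldistr) (auto intro!: M.finsum_cong' simp: Pi_iff smult_assoc1)

lemma lincomb_neg:
  assumes "finite S" "c \<in> S \<rightarrow> carrier R" "y \<in> S \<rightarrow> carrier M"
  shows "lincomb (\<lambda>i. \<ominus> c i) y S = \<ominus>\<^bsub>M\<^esub> lincomb c y S"
proof -
  have "lincomb (\<lambda>i. \<ominus> c i) y S = lincomb (\<lambda>i. \<ominus>\<one> \<otimes> c i) y S"
    using assms by (intro lincomb_cong) (auto simp: Pi_iff R.l_minus)
  also have "\<dots> = \<ominus>\<^bsub>M\<^esub> lincomb c y S"
    using assms by (simp add: lincomb_smult[symmetric] smult_l_minus)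
  finally show ?thesis .
qed

lemma lincomb_diff:
  "\<lbrakk>finite S; c \<in> S \<rightarrow> carrier R; d \<in> S \<rightarrow> carrier R; y \<in> S \<rightarrow> carrier M\<rbrakk>
   \<Longrightarrow> lincomb (\<lambda>i. c i \<ominus> d i) y S = lincomb c y S \<ominus>\<^bsub>M\<^esub> lincomb d y S"
  unfolding a_minus_def by (subst lincomb_add) (auto simp: Pi_iff lincomb_neg)

lemma lincomb_Un:
  "\<lbrakk>finite S; finite T; S \<inter> T = {}; c \<in> S \<union> T \<rightarrow> carrier R; y \<in> S \<union> T \<rightarrow> carrier M\<rbrakk>
   \<Longrightarrow> lincomb c y (S \<union> T) = lincomb c y S \<oplus>\<^bsub>M\<^esub> lincomb c y T"
  unfolding lincomb_def by (rule M.finsum_Un_disjoint) auto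

lemma lincomb_insert:
  "\<lbrakk>finite S; k \<notin> S; c \<in> insert k S \<rightarrow> carrier R; y \<in> insert k S \<rightarrow> carrier M\<rbrakk>
   \<Longrightarrow> lincomb c y (insert k S) = c k \<odot>\<^bsub>M\<^esub> y k \<oplus>\<^bsub>M\<^esub> lincomb c y S"
  unfolding lincomb_def by (subst M.finsum_insert) auto

lemma lincomb_reindex:
  "\<lbrakk>inj_on f S; c \<in> f ` S \<rightarrow> carrier R; y \<in> f ` S \<rightarrow> carrier M\<rbrakk>
   \<Longrightarrow> lincomb c y (f ` S) = lincomb (c \<circ> f) (y \<circ> f) S"
  unfolding lincomb_def by (subst M.finsum_reindex) auto

definition spans :: "('i \<Rightarrow> 'c) \<Rightarrow> 'i set \<Rightarrow> bool"
  where "spans y S \<longleftrightarrow> (\<forall>m\<in>carrier M. \<exists>c\<in>S \<rightarrow> carrier R. m = lincomb c y S)"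

definition lin_independent :: "('i \<Rightarrow> 'c) \<Rightarrow> 'i set \<Rightarrow> bool"
  where "lin_independent y S \<longleftrightarrow> (\<forall>c\<in>S \<rightarrow> carrier R. lincomb c y S = \<zero>\<^bsub>M\<^esub> \<longrightarrow> (\<forall>i\<in>S. c i = \<zero>))"

definition basis :: "('i \<Rightarrow> 'c) \<Rightarrow> 'i set \<Rightarrow> bool"
  where "basis y S \<longleftrightarrow> y \<in> S \<rightarrow> carrier M \<and> spans y S \<and> lin_independent y S"

lemma basis_coeffs_unique:
  assumes "finite S" "basis y S" "c \<in> S \<rightarrow> carrier R" "d \<in> S \<rightarrow> carrier R"
    and "lincomb c y S = lincomb d y S" "i \<in> S"
  shows "c i = d i"
proof -
  have "lincomb (\<lambda>i. c i \<ominus> d i) y S = lincomb c y S \<ominus>\<^bsub>M\<^esub> lincomb d y S"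
    using assms unfolding basis_def by (intro lincomb_diff) auto
  also have "\<dots> = \<zero>\<^bsub>M\<^esub>"
    using assms unfolding basis_def by (simp add: M.r_neg a_minus_def)
  finally have "lincomb (\<lambda>i. c i \<ominus> d i) y S = \<zero>\<^bsub>M\<^esub>" .
  then have "c i \<ominus> d i = \<zero>"
    using assms unfolding basis_def lin_independent_def by (auto simp: Pi_iff)
  then show ?thesis
    using assms R.r_right_minus_eq by blast
qed

lemma is_basis_iff_basis: "is_basis R M y r \<longleftrightarrow> basis y {1..r}"
proof
  assume b: "is_basis R M y r"
  have unique: "\<And>m c d. \<lbrakk>m \<in> carrier M; c \<in> {1..r} \<rightarrow>\<^sub>E carrier R; d \<in> {1..r} \<rightarrow>\<^sub>E carrier R;
      m = lincomb c y {1..r}; m = lincomb d y {1..r}\<rbrakk> \<Longrightarrow> c = d"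
    using b unfolding is_basis_def lincomb_def by blast
  have y: "y \<in> {1..r} \<rightarrow> carrier M"
    using b unfolding is_basis_def by auto
  have restrict: "lincomb (restrict c {1..r}) y {1..r} = lincomb c y {1..r}"
    if "c \<in> {1..r} \<rightarrow> carrier R" for c
    using that y by (intro lincomb_cong) auto
  have "spans y {1..r}"
    using b unfolding is_basis_def spans_def lincomb_def by (blast intro: PiE_iff[THEN iffD1, THEN conjunct1])
  moreover have "lin_independent y {1..r}"
    unfolding lin_independent_def
  proof (intro ballI impI)
    fix c i assume c: "c \<in> {1..r} \<rightarrow> carrier R" and "lincomb c y {1..r} = \<zero>\<^bsub>M\<^esub>" and i: "i \<in> {1..r}"
    moreover have "lincomb (\<lambda>i\<in>{1..r}. \<zero>) y {1..r} = \<zero>\<^bsub>M\<^esub>"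
      using y by (intro lincomb_zero) auto
    ultimately have "restrict c {1..r} = (\<lambda>i\<in>{1..r}. \<zero>)"
      using c restrict[OF c] by (intro unique[of "\<zero>\<^bsub>M\<^esub>"]) auto
    then show "c i = \<zero>"
      using i by (metis restrict_apply')
  qed
  ultimately show "basis y {1..r}"
    using y unfolding basis_def by blast
next
  assume b: "basis y {1..r}"
  show "is_basis R M y r"
    unfolding is_basis_def lincomb_def[symmetric]
  proof (intro conjI ballI)
    show "y i \<in> carrier M" if "i \<in> {1..r}" for i
      using b that unfolding basis_def by auto
  next
    fix m assume "m \<in> carrier M"
    then obtain c where c: "c \<in> {1..r} \<rightarrow> carrier R" "m = lincomb c y {1..r}"
      using b unfolding basis_def spans_def by blast
    show "\<exists>!c. c \<in> {1..r} \<rightarrow>\<^sub>E carrier R \<and> m = lincomb c y {1..r}"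
    proof (rule ex1I[of _ "restrict c {1..r}"])
      show "restrict c {1..r} \<in> {1..r} \<rightarrow>\<^sub>E carrier R \<and> m = lincomb (restrict c {1..r}) y {1..r}"
        using b c unfolding basis_def by (auto intro!: lincomb_cong)
    next
      fix d assume "d \<in> {1..r} \<rightarrow>\<^sub>E carrier R \<and> m = lincomb d y {1..r}"
      then show "d = restrict c {1..r}"
        using basis_coeffs_unique[OF _ b, of d c] c by (auto simp: PiE_iff extensional_def)
    qed
  qed
qed

lemma basis_reindex:
  assumes f: "bij_betw f S S" and y: "basis y S"
  shows "basis (y \<circ> f) S"
proof -
  have S: "f ` S = S" and inj: "inj_on f S"
    using f by (auto simp: bij_betw_def)
  have yS: "y \<in> S \<rightarrow> carrier M"
    using y by (simp add: basis_def)
  have reindex: "lincomb c y S = lincomb (c \<circ> f) (y \<circ> f) S" if "c \<in> S \<rightarrow> carrier R" for c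
    using lincomb_reindex[OF inj] that yS S by simp
  have "y \<circ> f \<in> S \<rightarrow> carrier M"
    using yS f by (auto simp: bij_betw_apply)
  moreover have "spans (y \<circ> f) S"
    unfolding spans_def
  proof
    fix m assume "m \<in> carrier M"
    then obtain d where d: "d \<in> S \<rightarrow> carrier R" "m = lincomb d y S"
      using y by (auto simp: basis_def spans_def)
    then have "d \<circ> f \<in> S \<rightarrow> carrier R"
      using f by (auto simp: bij_betw_apply)
    then show "\<exists>c\<in>S \<rightarrow> carrier R. m = lincomb c (y \<circ> f) S"
      using d reindex by blast
  qed
  moreover have "lin_independent (y \<circ> f) S"
    unfolding lin_independent_def
  proof (intro ballI impI)
    fix b i assume b: "b \<in> S \<rightarrow> carrier R" and b0: "lincomb b (y \<circ> f) S = \<zero>\<^bsub>M\<^esub>" and i: "i \<in> S"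
    define b' where "b' = b \<circ> inv_into S f"
    have b': "b' \<in> S \<rightarrow> carrier R"
      using b f by (auto simp: b'_def bij_betw_def inv_into_into)
    have "lincomb b' y S = lincomb b (y \<circ> f) S"
      using reindex[OF b'] b yS inj f by (auto simp: b'_def bij_betw_apply intro!: lincomb_cong)
    then have "\<forall>i\<in>S. b' i = \<zero>"
      using y b' b0 by (auto simp: basis_def lin_independent_def)
    then show "b i = \<zero>"
      using i inj f by (metis b'_def bij_betw_apply comp_apply inv_into_f_f)
  qed
  ultimately show ?thesis
    by (simp add: basis_def)
qed

lemma lincomb_update:
  assumes S: "finite S" "k \<in> S" and c: "c \<in> S \<rightarrow> carrier R" and b: "b \<in> S \<rightarrow> carrier R"
    and y: "y \<in> S \<rightarrow> carrier M"
  shows "lincomb b (y(k := lincomb c y S)) S = lincomb (\<lambda>i. (if i = k then \<zero> else b i) \<oplus> b k \<otimes> c i) y S"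
proof -
  let ?b0 = "\<lambda>i. if i = k then \<zero> else b i"
  define z where "z = lincomb c y S"
  have S_eq: "insert k (S - {k}) = S"
    using S by auto
  have bk: "b k \<in> carrier R"
    using b S by auto
  have b0: "?b0 \<in> S \<rightarrow> carrier R"
    using b by auto
  have z: "z \<in> carrier M"
    using c y by (simp add: z_def)
  have "lincomb b (y(k := z)) (S - {k}) = lincomb b y (S - {k})"
    using b y by (intro lincomb_cong) (auto simp: Pi_iff)
  moreover have "lincomb b (y(k := z)) (insert k (S - {k}))
      = b k \<odot>\<^bsub>M\<^esub> z \<oplus>\<^bsub>M\<^esub> lincomb b (y(k := z)) (S - {k})"
    using S b z y by (subst lincomb_insert) auto
  ultimately have "lincomb b (y(k := z)) (insert k (S - {k})) = b k \<odot>\<^bsub>M\<^esub> z \<oplus>\<^bsub>M\<^esub> lincomb b y (S - {k})"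
    by simp
  then have "lincomb b (y(k := z)) S = b k \<odot>\<^bsub>M\<^esub> z \<oplus>\<^bsub>M\<^esub> lincomb b y (S - {k})"
    by (simp only: S_eq)
  also have "lincomb b y (S - {k}) = lincomb ?b0 y (S - {k})"
    using b y by (intro lincomb_cong) (auto simp: Pi_iff)
  also have "\<dots> = lincomb ?b0 y (insert k (S - {k}))"
  proof -
    have "lincomb ?b0 y (S - {k}) \<in> carrier M"
      using b0 y by (intro lincomb_closed) auto
    then show ?thesis
      using S b0 y by (subst lincomb_insert) (auto simp: Pi_iff)
  qed
  also have "\<dots> = lincomb ?b0 y S"
    by (simp only: S_eq)
  also have "b k \<odot>\<^bsub>M\<^esub> z = lincomb (\<lambda>i. b k \<otimes> c i) y S"
    using S bk c y by (simp add: z_def lincomb_smult)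
  also have "\<dots> \<oplus>\<^bsub>M\<^esub> lincomb ?b0 y S = lincomb (\<lambda>i. ?b0 i \<oplus> b k \<otimes> c i) y S"
  proof -
    have "lincomb (\<lambda>i. b k \<otimes> c i) y S \<in> carrier M" "lincomb ?b0 y S \<in> carrier M"
      using bk b0 c y by (auto simp: Pi_iff intro!: lincomb_closed)
    then show ?thesis
      using bk b0 c y by (subst lincomb_add) (auto simp: Pi_iff M.a_comm)
  qed
  finally show ?thesis
    unfolding z_def .
qed

lemma basis_exchange:
  assumes S: "finite S" "k \<in> S" and c: "c \<in> S \<rightarrow> carrier R" and unit: "c k \<in> Units R"
    and y: "basis y S"
  shows "basis (y(k := lincomb c y S)) S"
proof -
  let ?y = "y(k := lincomb c y S)"
  have yS: "y \<in> S \<rightarrow> carrier M"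
    using y by (simp add: basis_def)
  have ck: "c k \<in> carrier R" and u: "inv c k \<in> carrier R"
    using unit by auto
  have "spans ?y S"
    unfolding spans_def
  proof
    fix m assume "m \<in> carrier M"
    then obtain d where d: "d \<in> S \<rightarrow> carrier R" "m = lincomb d y S"
      using y by (auto simp: basis_def spans_def)
    have dk: "d k \<in> carrier R"
      using d S by auto
    \<comment> \<open>solve for the old basis vector: \<open>y k = inv (c k) (lincomb c y S - \<Sum>_(i \<noteq> k) c i y i)\<close>\<close>
    define b where "b i = (if i = k then d k \<otimes> inv c k else d i \<ominus> d k \<otimes> inv c k \<otimes> c i)" for i
    have b: "b \<in> S \<rightarrow> carrier R"
      using d c dk u by (auto simp: b_def Pi_iff)
    have "(if i = k then \<zero> else b i) \<oplus> b k \<otimes> c i = d i" if "i \<in> S" for i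
    proof (cases "i = k")
      case True
      then show ?thesis
        using unit dk u ck by (simp add: b_def R.m_assoc)
    next
      case False
      have "c i \<in> carrier R" "d i \<in> carrier R"
        using that c d by auto
      then show ?thesis
        using False dk u by (simp add: b_def a_minus_def R.a_assoc R.l_neg)
    qed
    then have "lincomb b ?y S = m"
      using S c b yS d by (simp add: lincomb_update cong: lincomb_cong)
    then show "\<exists>b\<in>S \<rightarrow> carrier R. m = lincomb b ?y S"
      using b by blast
  qed
  moreover have "lin_independent ?y S"
    unfolding lin_independent_def
  proof (intro ballI impI)
    fix b i assume b: "b \<in> S \<rightarrow> carrier R" and b0: "lincomb b ?y S = \<zero>\<^bsub>M\<^esub>" and i: "i \<in> S"
    have bk: "b k \<in> carrier R"
      using b S by auto
    have "(\<lambda>i. (if i = k then \<zero> else b i) \<oplus> b k \<otimes> c i) \<in> S \<rightarrow> carrier R"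
      using b c bk by (auto simp: Pi_iff)
    then have coeffs: "\<forall>i\<in>S. (if i = k then \<zero> else b i) \<oplus> b k \<otimes> c i = \<zero>"
      using y b0 lincomb_update[OF S c b yS] by (auto simp: basis_def lin_independent_def)
    then have "b k \<otimes> c k = \<zero>"
      using S bk ck by auto
    then have "b k = \<zero>"
      using bk unit by (metis R.Units_closed R.Units_r_inv R.m_assoc R.r_one R.l_null u)
    then show "b i = \<zero>"
      using coeffs i b c by (cases "i = k") (auto simp: Pi_iff)
  qed
  moreover have "?y \<in> S \<rightarrow> carrier M"
    using yS c by (auto intro!: lincomb_closed)
  ultimately show ?thesis
    by (simp add: basis_def)
qed

definition coords :: "('i \<Rightarrow> 'c) \<Rightarrow> 'i set \<Rightarrow> 'c \<Rightarrow> 'i \<Rightarrow> 'a"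
  where "coords y S m = (THE c. c \<in> S \<rightarrow>\<^sub>E carrier R \<and> m = lincomb c y S)"

lemma coords_lincomb:
  assumes S: "finite S" and y: "basis y S" and c: "c \<in> S \<rightarrow> carrier R"
  shows "coords y S (lincomb c y S) = restrict c S"
proof -
  have c': "restrict c S \<in> S \<rightarrow>\<^sub>E carrier R \<and> lincomb c y S = lincomb (restrict c S) y S"
    using c y by (auto simp: basis_def intro!: lincomb_cong)
  have "d = restrict c S" if "d \<in> S \<rightarrow>\<^sub>E carrier R \<and> lincomb c y S = lincomb d y S" for d
    using that c basis_coeffs_unique[OF S y, of d c] by (auto simp: PiE_iff extensional_def)
  then show ?thesis
    unfolding coords_def using c' by (intro the1_equality ex1I[of _ "restrict c S"]) auto
qed

lemma coords_in_PiE: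
  assumes "finite S" "basis y S" "m \<in> carrier M"
  shows "coords y S m \<in> S \<rightarrow>\<^sub>E carrier R" and "lincomb (coords y S m) y S = m"
proof -
  obtain c where c: "c \<in> S \<rightarrow> carrier R" "m = lincomb c y S"
    using assms by (auto simp: basis_def spans_def)
  then show "coords y S m \<in> S \<rightarrow>\<^sub>E carrier R"
    using assms by (simp add: coords_lincomb)
  show "lincomb (coords y S m) y S = m"
    using assms c by (auto simp: coords_lincomb basis_def intro!: lincomb_cong)
qed

lemma lin_span_eq: "lin_span R M x j = {lincomb c x {1..j} | c. c \<in> {1..j} \<rightarrow> carrier R}"
  by (simp add: lin_span_def lincomb_def)

lemma lin_span_subgroup:
  assumes x: "x \<in> {1..j} \<rightarrow> carrier M"
  shows "subgroup (lin_span R M x j) (add_monoid M)"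
proof (rule M.add.subgroupI)
  show "lin_span R M x j \<subseteq> carrier M"
    using x by (auto simp: lin_span_eq)
  have "(\<lambda>i. \<zero>) \<in> {1..j} \<rightarrow> carrier R"
    by simp
  then show "lin_span R M x j \<noteq> {}"
    by (auto simp: lin_span_eq)
next
  fix u assume "u \<in> lin_span R M x j"
  then obtain c where "c \<in> {1..j} \<rightarrow> carrier R" "u = lincomb c x {1..j}"
    by (auto simp: lin_span_eq)
  moreover have "(\<lambda>i. \<ominus> c i) \<in> {1..j} \<rightarrow> carrier R" if "c \<in> {1..j} \<rightarrow> carrier R" for c
    using that by (auto simp: Pi_iff)
  ultimately show "\<ominus>\<^bsub>M\<^esub> u \<in> lin_span R M x j"
    using x by (auto simp: lin_span_eq lincomb_neg[symmetric] simp del: lincomb_closed)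
next
  fix u v assume "u \<in> lin_span R M x j" "v \<in> lin_span R M x j"
  then obtain c d where "c \<in> {1..j} \<rightarrow> carrier R" "u = lincomb c x {1..j}"
    and "d \<in> {1..j} \<rightarrow> carrier R" "v = lincomb d x {1..j}"
    by (auto simp: lin_span_eq)
  moreover have "(\<lambda>i. c i \<oplus> d i) \<in> {1..j} \<rightarrow> carrier R"
    using calculation by (auto simp: Pi_iff)
  ultimately show "u \<oplus>\<^bsub>M\<^esub> v \<in> lin_span R M x j"
    using x by (auto simp: lin_span_eq lincomb_add[symmetric] simp del: lincomb_closed)
qed

lemma lincomb_truncate:
  assumes jr: "j \<le> (r::nat)" and b: "b \<in> {1..r} \<rightarrow> carrier R" and y: "y \<in> {1..r} \<rightarrow> carrier M"
    and zero: "\<forall>i\<in>{j<..r}. b i = \<zero>"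
  shows "lincomb b y {1..r} = lincomb b y {1..j}"
proof -
  have split: "{1..r} = {1..j} \<union> {j<..r}"
    using jr by auto
  have "lincomb b y ({1..j} \<union> {j<..r}) = lincomb b y {1..j} \<oplus>\<^bsub>M\<^esub> lincomb b y {j<..r}"
    using b y split by (intro lincomb_Un) auto
  moreover have "lincomb b y {j<..r} = \<zero>\<^bsub>M\<^esub>"
    using zero y by (intro lincomb_zero) auto
  moreover have "lincomb b y {1..j} \<in> carrier M"
    using b y jr by (intro lincomb_closed) auto
  ultimately show ?thesis
    using split by simp
qed

lemma lincomb_mem_lin_span_iff:
  assumes y: "basis y {1..r}" and jr: "j \<le> r"
    and s: "s \<in> {1..j} \<rightarrow> carrier R" and x: "\<forall>i\<in>{1..j}. x i = s i \<odot>\<^bsub>M\<^esub> y i"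
    and c: "c \<in> {1..r} \<rightarrow> carrier R"
  shows "lincomb c y {1..r} \<in> lin_span R M x j
    \<longleftrightarrow> (\<forall>i\<in>{1..j}. s i divides c i) \<and> (\<forall>i\<in>{j<..r}. c i = \<zero>)"
proof -
  have yr: "y \<in> {1..r} \<rightarrow> carrier M"
    using y by (simp add: basis_def)
  have truncate: "lincomb b y {1..r} = lincomb b y {1..j}"
    if "b \<in> {1..r} \<rightarrow> carrier R" "\<forall>i\<in>{j<..r}. b i = \<zero>" for b
    using lincomb_truncate[OF jr that(1) yr that(2)] .
  have span: "lincomb t x {1..j} = lincomb (\<lambda>i. s i \<otimes> t i) y {1..j}"
    if t: "t \<in> {1..j} \<rightarrow> carrier R" for t
    using t s x yr jr by (intro lincomb_cong) (auto simp: Pi_iff smult_assoc1[symmetric] R.m_comm)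
  show ?thesis
  proof
    assume "lincomb c y {1..r} \<in> lin_span R M x j"
    then obtain t where t: "t \<in> {1..j} \<rightarrow> carrier R" "lincomb c y {1..r} = lincomb t x {1..j}"
      by (auto simp: lin_span_eq)
    define c' where "c' i = (if i \<le> j then s i \<otimes> t i else \<zero>)" for i
    have c': "c' \<in> {1..r} \<rightarrow> carrier R"
      using s t by (auto simp: c'_def Pi_iff)
    have "lincomb c' y {1..r} = lincomb c' y {1..j}"
      using c' by (intro truncate) (auto simp: c'_def)
    also have "\<dots> = lincomb (\<lambda>i. s i \<otimes> t i) y {1..j}"
      using t s yr jr by (auto simp: c'_def Pi_iff intro!: lincomb_cong)
    also have "\<dots> = lincomb t x {1..j}"
      using span[OF t(1)] by simp
    finally have "lincomb c' y {1..r} = lincomb c y {1..r}"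
      using t by simp
    then have "c i = c' i" if "i \<in> {1..r}" for i
      using basis_coeffs_unique[OF _ y c c'] that by simp
    then show "(\<forall>i\<in>{1..j}. s i divides c i) \<and> (\<forall>i\<in>{j<..r}. c i = \<zero>)"
      using jr s t by (fastforce simp: c'_def Pi_iff factor_def)
  next
    assume "(\<forall>i\<in>{1..j}. s i divides c i) \<and> (\<forall>i\<in>{j<..r}. c i = \<zero>)"
    then obtain t where t: "\<forall>i\<in>{1..j}. t i \<in> carrier R \<and> c i = s i \<otimes> t i" and c0: "\<forall>i\<in>{j<..r}. c i = \<zero>"
      unfolding factor_def by metis
    have "lincomb c y {1..r} = lincomb c y {1..j}"
      using c c0 by (intro truncate)
    also have "\<dots> = lincomb (\<lambda>i. s i \<otimes> t i) y {1..j}"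
      using t s yr jr by (auto simp: Pi_iff intro!: lincomb_cong)
    also have "\<dots> = lincomb t x {1..j}"
      using t by (intro span[symmetric]) auto
    finally show "lincomb c y {1..r} \<in> lin_span R M x j"
      using t by (auto simp: lin_span_eq Pi_iff)
  qed
qed

end

section \<open>Chain rings and adapted bases\<close>

text \<open>The properties of \<open>D/(\<alpha>^n)\<close> used below, with \<open>a\<close> the image of \<open>\<alpha>\<close>: a local ring with
  nilpotent principal maximal ideal \<open>aR\<close>, whose ideals are the powers of \<open>aR\<close>.\<close>

locale chain_ring = cring +
  fixes a :: 'a and n :: nat
  assumes uniformizer_closed [simp]: "a \<in> carrier R"
    and uniformizer_not_unit: "a \<notin> Units R"
    and uniformizer_nilpotent: "a [^] n = \<zero>"
    and unit_or_divisible: "c \<in> carrier R \<Longrightarrow> c \<in> Units R \<or> a divides c"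
    and annihilator_pow: "\<lbrakk>k \<le> n; c \<in> carrier R; a [^] k \<otimes> c = \<zero>\<rbrakk> \<Longrightarrow> a [^] (n - k) divides c"
begin

lemma nilpotency_pos: "0 < n"
proof (rule ccontr)
  assume "\<not> 0 < n"
  then have "\<one> = \<zero>"
    using uniformizer_nilpotent by simp
  then have "a \<otimes> a = \<one>"
    by (metis r_null r_one uniformizer_closed)
  then show False
    using uniformizer_not_unit by (auto simp: Units_def)
qed

lemma nilpotent_pow_divides_iff: "c \<in> carrier R \<Longrightarrow> a [^] n divides c \<longleftrightarrow> c = \<zero>"
  using uniformizer_nilpotent zero_divides by simp

lemma not_divides_one: "\<not> a divides \<one>"
  using divides_one uniformizer_not_unit by simp

lemma divides_of_pow_mult:
  assumes m: "m < n" and c: "c \<in> carrier R" and dvd: "a [^] Suc m divides c \<otimes> a [^] m"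
  shows "a divides c"
proof -
  obtain t where t: "t \<in> carrier R" "c \<otimes> a [^] m = a [^] Suc m \<otimes> t"
    using dvd by (auto simp: factor_def)
  have am: "a [^] m \<in> carrier R"
    by simp
  have "a [^] m \<otimes> (c \<ominus> a \<otimes> t) = a [^] m \<otimes> c \<ominus> a [^] m \<otimes> (a \<otimes> t)"
    using am c t(1) by (simp add: a_minus_def r_distr r_minus)
  also have "\<dots> = c \<otimes> a [^] m \<ominus> a [^] Suc m \<otimes> t"
    using am c t(1) by (simp add: m_comm m_assoc m_lcomm)
  finally have "a [^] m \<otimes> (c \<ominus> a \<otimes> t) = \<zero>"
    using t am c by (simp add: r_right_minus_eq)
  then have "a [^] (n - m) divides (c \<ominus> a \<otimes> t)"
    using m c t by (intro annihilator_pow) auto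
  moreover have "a [^] (n - m) = a \<otimes> a [^] (n - Suc m)"
    using m nat_pow_Suc2[OF uniformizer_closed, of "n - Suc m"] by (simp add: Suc_diff_Suc)
  ultimately obtain u where u: "u \<in> carrier R" "c \<ominus> a \<otimes> t = a \<otimes> u"
    unfolding factor_def by (metis m_assoc nat_pow_closed uniformizer_closed m_closed)
  have "c = (c \<ominus> a \<otimes> t) \<oplus> a \<otimes> t"
    using c t by (simp add: a_minus_def a_assoc l_neg)
  also have "\<dots> = a \<otimes> (u \<oplus> t)"
    using u t by (simp add: r_distr)
  finally show ?thesis
    using u t by (auto simp: factor_def)
qed

end

locale chain_ring_module = chain_ring + module R M for M (structure)
begin

lemma multiple_of_annihilated:
  assumes S: "finite S" and e: "basis e S" and m: "m \<in> carrier M"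
    and k: "k \<le> n" and ann: "a [^] k \<odot>\<^bsub>M\<^esub> m = \<zero>\<^bsub>M\<^esub>"
  shows "\<exists>w\<in>carrier M. m = a [^] (n - k) \<odot>\<^bsub>M\<^esub> w"
proof -
  let ?c = "coords e S m"
  have c: "?c \<in> S \<rightarrow> carrier R" and m_eq: "lincomb ?c e S = m"
    using coords_in_PiE[OF S e m] by auto
  have eS: "e \<in> S \<rightarrow> carrier M"
    using e by (simp add: basis_def)
  have "lincomb (\<lambda>i. a [^] k \<otimes> ?c i) e S = \<zero>\<^bsub>M\<^esub>"
    using S c eS ann m_eq by (simp add: lincomb_smult[symmetric])
  moreover have "(\<lambda>i. a [^] k \<otimes> ?c i) \<in> S \<rightarrow> carrier R"
    using c by auto
  ultimately have "\<forall>i\<in>S. a [^] k \<otimes> ?c i = \<zero>"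
    using e by (simp add: basis_def lin_independent_def)
  then have "\<forall>i\<in>S. \<exists>t\<in>carrier R. ?c i = a [^] (n - k) \<otimes> t"
    using annihilator_pow k c unfolding factor_def by blast
  then obtain t where "\<forall>i\<in>S. t i \<in> carrier R \<and> ?c i = a [^] (n - k) \<otimes> t i"
    by metis
  then have t: "t \<in> S \<rightarrow> carrier R" "\<forall>i\<in>S. ?c i = a [^] (n - k) \<otimes> t i"
    by auto
  have "lincomb ?c e S = lincomb (\<lambda>i. a [^] (n - k) \<otimes> t i) e S"
    using t eS by (intro lincomb_cong) (auto simp: Pi_iff)
  then have "m = lincomb (\<lambda>i. a [^] (n - k) \<otimes> t i) e S"
    using m_eq by simp
  also have "\<dots> = a [^] (n - k) \<odot>\<^bsub>M\<^esub> lincomb t e S"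
    using S t eS by (simp add: lincomb_smult)
  finally show ?thesis
    using t eS by blast
qed

text \<open>The images of the \<open>z i\<close> in \<open>M/aM\<close> are linearly independent over the residue field \<open>R/aR\<close>.\<close>

definition residually_independent :: "('i \<Rightarrow> 'c) \<Rightarrow> 'i set \<Rightarrow> bool"
  where "residually_independent z S \<longleftrightarrow> (\<forall>b\<in>S \<rightarrow> carrier R.
    (\<exists>w\<in>carrier M. lincomb b z S = a \<odot>\<^bsub>M\<^esub> w) \<longrightarrow> (\<forall>i\<in>S. a divides b i))"

lemma residually_independent_if_direct:
  assumes z: "z \<in> {1..j} \<rightarrow> carrier M"
    and x: "\<forall>i\<in>{1..j}. x i = a [^] (n - ni i) \<odot>\<^bsub>M\<^esub> z i"
    and ni: "\<forall>i\<in>{1..j}. 1 \<le> ni i \<and> ni i \<le> n"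
    and direct: "sum_is_direct R M x j"
    and ann: "\<forall>i\<in>{1..j}. Ann R M (x i) = {c \<in> carrier R. a [^] ni i divides c}"
  shows "residually_independent z {1..j}"
  unfolding residually_independent_def
proof (intro ballI impI)
  fix b i assume b: "b \<in> {1..j} \<rightarrow> carrier R" and i: "i \<in> {1..j}"
    and "\<exists>w\<in>carrier M. lincomb b z {1..j} = a \<odot>\<^bsub>M\<^esub> w"
  then obtain w where w: "w \<in> carrier M" "lincomb b z {1..j} = a \<odot>\<^bsub>M\<^esub> w"
    by blast
  let ?q = "a [^] (n - 1)"
  \<comment> \<open>multiplying by \<open>a^(n - 1)\<close> turns the relation into one among the \<open>x i\<close>\<close>
  let ?d = "\<lambda>i. b i \<otimes> a [^] (ni i - 1)"
  have d: "?d \<in> {1..j} \<rightarrow> carrier R"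
    using b by auto
  have "?q \<otimes> a = a [^] n"
    using nilpotency_pos by (metis Suc_diff_1 nat_pow_Suc)
  then have "?q \<odot>\<^bsub>M\<^esub> lincomb b z {1..j} = \<zero>\<^bsub>M\<^esub>"
    using w by (simp add: smult_assoc1[symmetric] uniformizer_nilpotent)
  moreover have "?q \<odot>\<^bsub>M\<^esub> lincomb b z {1..j} = lincomb ?d x {1..j}"
  proof -
    have "?q \<odot>\<^bsub>M\<^esub> lincomb b z {1..j} = lincomb (\<lambda>i. ?q \<otimes> b i) z {1..j}"
      using b z by (simp add: lincomb_smult)
    also have "\<dots> = lincomb ?d x {1..j}"
    proof (rule lincomb_cong)
      fix k assume k: "k \<in> {1..j}"
      have "a [^] (ni k - 1) \<otimes> a [^] (n - ni k) = ?q"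
        using ni k by (simp add: nat_pow_mult)
      moreover have "b k \<in> carrier R"
        using b k by auto
      ultimately have "?d k \<otimes> a [^] (n - ni k) = ?q \<otimes> b k"
        by (metis m_assoc m_comm nat_pow_closed uniformizer_closed)
      then show "(?q \<otimes> b k) \<odot>\<^bsub>M\<^esub> z k = ?d k \<odot>\<^bsub>M\<^esub> x k"
        using x b z k by (simp add: smult_assoc1[symmetric] Pi_iff)
    qed (use d x z in \<open>auto simp: Pi_iff\<close>)
    finally show ?thesis .
  qed
  ultimately have "lincomb ?d x {1..j} = \<zero>\<^bsub>M\<^esub>"
    by simp
  then have "?d i \<odot>\<^bsub>M\<^esub> x i = \<zero>\<^bsub>M\<^esub>"
    using direct d i unfolding sum_is_direct_def lincomb_def by auto
  then have "?d i \<in> Ann R M (x i)"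
    using b i by (auto simp: Ann_def Pi_iff)
  then have "a [^] ni i divides ?d i"
    using ann i by auto
  moreover have "1 \<le> ni i" "ni i \<le> n"
    using ni i by auto
  ultimately show "a divides b i"
    using i b by (intro divides_of_pow_mult[of "ni i - 1"]) (auto simp: Suc_diff_le)
qed

lemma unit_coeff_beyond:
  assumes y: "basis y {1..r}" and p: "p < j" "j \<le> (r::nat)"
    and agree: "\<forall>i\<in>{1..p}. y i = z i" and z: "z \<in> {1..j} \<rightarrow> carrier M"
    and res: "residually_independent z {1..j}"
    and c: "c \<in> {1..r} \<rightarrow> carrier R" and zc: "z (Suc p) = lincomb c y {1..r}"
  shows "\<exists>k\<in>{Suc p..r}. c k \<in> Units R"
proof (rule ccontr)
  assume no_unit: "\<not> ?thesis"
  have "a divides c k" if k: "k \<in> {Suc p..r}" for k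
  proof -
    have "c k \<in> carrier R"
      using c k by auto
    then show ?thesis
      using unit_or_divisible no_unit k by blast
  qed
  then obtain t where t: "\<forall>k\<in>{Suc p..r}. t k \<in> carrier R \<and> c k = a \<otimes> t k"
    unfolding factor_def by metis
  have yr: "y \<in> {1..r} \<rightarrow> carrier M"
    using y by (simp add: basis_def)
  let ?A = "lincomb c y {1..p}" and ?B = "lincomb c y {Suc p..r}"
  have A: "?A \<in> carrier M" and B: "?B \<in> carrier M"
    using c yr p by (auto simp: Pi_iff intro!: lincomb_closed)
  have "{1..r} = {1..p} \<union> {Suc p..r}"
    using p by auto
  then have z_split: "z (Suc p) = ?A \<oplus>\<^bsub>M\<^esub> ?B"
    using zc c yr by (simp add: lincomb_Un)
  \<comment> \<open>\<open>z (Suc p) - \<Sum>_(i \<le> p) c i z i \<in> aM\<close> is a relation with coefficient \<open>\<one>\<close> at \<open>Suc p\<close>\<close>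
  define b where "b i = (if i \<le> p then \<ominus> c i else if i = Suc p then \<one> else \<zero>)" for i
  have b: "b \<in> {1..j} \<rightarrow> carrier R"
    using c p by (auto simp: b_def Pi_iff)
  have j_split: "{1..j} = {1..p} \<union> insert (Suc p) {Suc (Suc p)..j}"
    using p by auto
  have "lincomb b z {1..p} = lincomb (\<lambda>i. \<ominus> c i) y {1..p}"
    using c z agree p by (intro lincomb_cong) (auto simp: b_def Pi_iff)
  also have "\<dots> = \<ominus>\<^bsub>M\<^esub> ?A"
    using c yr p by (intro lincomb_neg) (auto simp: Pi_iff)
  finally have "lincomb b z {1..p} = \<ominus>\<^bsub>M\<^esub> ?A" .
  moreover have "lincomb b z (insert (Suc p) {Suc (Suc p)..j}) = z (Suc p)"
  proof -
    have "lincomb b z {Suc (Suc p)..j} = \<zero>\<^bsub>M\<^esub>"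
      using z by (intro lincomb_zero) (auto simp: b_def)
    then show ?thesis
      using b z p by (subst lincomb_insert) (auto simp: b_def Pi_iff)
  qed
  moreover have "lincomb b z {1..j}
      = lincomb b z {1..p} \<oplus>\<^bsub>M\<^esub> lincomb b z (insert (Suc p) {Suc (Suc p)..j})"
    unfolding j_split using b z p by (intro lincomb_Un) (auto simp: Pi_iff)
  ultimately have "lincomb b z {1..j} = \<ominus>\<^bsub>M\<^esub> ?A \<oplus>\<^bsub>M\<^esub> (?A \<oplus>\<^bsub>M\<^esub> ?B)"
    using z_split by simp
  also have "\<dots> = ?B"
    using A B by (simp add: M.a_assoc[symmetric] M.l_neg)
  also have "\<dots> = lincomb (\<lambda>k. a \<otimes> t k) y {Suc p..r}"
    using t yr by (intro lincomb_cong) auto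
  also have "\<dots> = a \<odot>\<^bsub>M\<^esub> lincomb t y {Suc p..r}"
    using t yr by (subst lincomb_smult) (auto simp: Pi_iff)
  finally have "\<exists>w\<in>carrier M. lincomb b z {1..j} = a \<odot>\<^bsub>M\<^esub> w"
    using t yr by (auto simp: Pi_iff intro!: lincomb_closed)
  then have "a divides b (Suc p)"
    using res b p unfolding residually_independent_def by auto
  then show False
    using not_divides_one by (simp add: b_def)
qed

lemma residually_independent_extends_to_basis:
  assumes e: "basis e {1..r}" and jr: "j \<le> (r::nat)"
    and z: "z \<in> {1..j} \<rightarrow> carrier M" and res: "residually_independent z {1..j}"
  shows "\<exists>y. basis y {1..r} \<and> (\<forall>i\<in>{1..j}. y i = z i)"
proof -
  have "p \<le> j \<Longrightarrow> \<exists>y. basis y {1..r} \<and> (\<forall>i\<in>{1..p}. y i = z i)" for p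
  proof (induction p)
    case 0
    show ?case
      using e by auto
  next
    case (Suc p)
    then obtain y where y: "basis y {1..r}" and agree: "\<forall>i\<in>{1..p}. y i = z i"
      by auto
    have zp: "z (Suc p) \<in> carrier M"
      using z Suc.prems by auto
    then obtain c where c: "c \<in> {1..r} \<rightarrow> carrier R" "z (Suc p) = lincomb c y {1..r}"
      using y by (auto simp: basis_def spans_def)
    obtain k where k: "k \<in> {Suc p..r}" "c k \<in> Units R"
      using unit_coeff_beyond[OF y _ jr agree z res c] Suc.prems by auto
    \<comment> \<open>move the unit coefficient to position \<open>Suc p\<close>, then exchange\<close>
    let ?\<tau> = "Transposition.transpose k (Suc p)"
    have k1: "k \<in> {1..r}" and p1: "Suc p \<in> {1..r}"
      using k Suc.prems jr by auto
    then have \<tau>: "bij_betw ?\<tau> {1..r} {1..r}" "?\<tau> ` {1..r} = {1..r}"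
      by auto
    have y\<tau>: "basis (y \<circ> ?\<tau>) {1..r}"
      using basis_reindex[OF \<tau>(1) y] .
    have "z (Suc p) = lincomb (c \<circ> ?\<tau>) (y \<circ> ?\<tau>) {1..r}"
      using c y \<tau> lincomb_reindex[of ?\<tau> "{1..r}" c y] by (simp add: basis_def)
    moreover have "c \<circ> ?\<tau> \<in> {1..r} \<rightarrow> carrier R"
      using c bij_betw_apply[OF \<tau>(1)] by (auto simp: Pi_iff)
    moreover have "(c \<circ> ?\<tau>) (Suc p) \<in> Units R"
      using k by simp
    ultimately have "basis ((y \<circ> ?\<tau>)(Suc p := z (Suc p))) {1..r}"
      using basis_exchange[OF _ p1 _ _ y\<tau>] by simp
    moreover have "\<forall>i\<in>{1..Suc p}. ((y \<circ> ?\<tau>)(Suc p := z (Suc p))) i = z i"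
      using agree k by auto
    ultimately show ?case
      by blast
  qed
  from this[of j] show ?thesis
    by simp
qed

lemma adapted_basis_exists:
  assumes e: "basis e {1..r}" and jr: "j \<le> (r::nat)"
    and x: "x \<in> {1..j} \<rightarrow> carrier M" and direct: "sum_is_direct R M x j"
    and ni: "\<forall>i\<in>{1..j}. 1 \<le> ni i \<and> ni i \<le> n"
    and ann: "\<forall>i\<in>{1..j}. Ann R M (x i) = {c \<in> carrier R. a [^] ni i divides c}"
  shows "\<exists>y. basis y {1..r} \<and> (\<forall>i\<in>{1..j}. x i = a [^] (n - ni i) \<odot>\<^bsub>M\<^esub> y i)"
proof -
  have "\<exists>w\<in>carrier M. x i = a [^] (n - ni i) \<odot>\<^bsub>M\<^esub> w" if i: "i \<in> {1..j}" for i
  proof (rule multiple_of_annihilated[OF _ e])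
    have "a [^] ni i \<in> Ann R M (x i)"
      using ann i by simp
    then show "a [^] ni i \<odot>\<^bsub>M\<^esub> x i = \<zero>\<^bsub>M\<^esub>"
      by (simp add: Ann_def)
  qed (use x ni i in auto)
  then obtain z where z: "\<forall>i\<in>{1..j}. z i \<in> carrier M \<and> x i = a [^] (n - ni i) \<odot>\<^bsub>M\<^esub> z i"
    by metis
  then have "residually_independent z {1..j}"
    by (intro residually_independent_if_direct[OF _ _ ni direct ann]) (use z in auto)
  moreover have "z \<in> {1..j} \<rightarrow> carrier M"
    using z by auto
  ultimately obtain y where "basis y {1..r}" "\<forall>i\<in>{1..j}. y i = z i"
    using residually_independent_extends_to_basis[OF e jr] by blast
  then show ?thesis
    using z by auto
qed

end

section \<open>Coordinatewise quotients of free modules over \<open>R/J\<close>\<close>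

lemma carrier_FactRing: "carrier (R Quot I) = (+>\<^bsub>R\<^esub>) I ` carrier R"
  by (auto simp: FactRing_def A_RCOSETS_def RCOSETS_def a_r_coset_def)

lemma (in ring) rcos_eq_iff_minus_mem:
  assumes I: "ideal I R" and d: "d \<in> carrier R" and e: "e \<in> carrier R"
  shows "I +> d = I +> e \<longleftrightarrow> d \<ominus> e \<in> I"
proof -
  interpret ideal I R
    by (rule I)
  have "I +> d = I +> e \<longleftrightarrow> d \<in> I +> e"
    using d e a_repr_independenceD a_repr_independence' by (metis a_rcos_self)
  also have "\<dots> \<longleftrightarrow> d \<ominus> e \<in> I"
    using d e by (simp add: a_rcos_module_minus[OF ring_axioms])
  finally show ?thesis .
qed

lemma (in ring) set_add_rcos_of_subset:
  assumes K: "ideal K R" and J: "ideal J R" and JK: "J \<subseteq> K" and d: "d \<in> carrier R"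
  shows "K <+>\<^bsub>R\<^esub> (J +> d) = K +> d"
proof -
  interpret K: ideal K R
    by (rule K)
  interpret J: ideal J R
    by (rule J)
  have "K <+>\<^bsub>R\<^esub> J = K"
  proof
    show "K <+>\<^bsub>R\<^esub> J \<subseteq> K"
    proof
      fix x assume "x \<in> K <+>\<^bsub>R\<^esub> J"
      then obtain k j where "k \<in> K" "j \<in> J" "x = k \<oplus> j"
        unfolding set_add_def' by blast
      then show "x \<in> K"
        using JK by blast
    qed
    show "K \<subseteq> K <+>\<^bsub>R\<^esub> J"
    proof
      fix k assume k: "k \<in> K"
      then have "k = k \<oplus> \<zero>"
        using K.a_subset by auto
      then show "k \<in> K <+>\<^bsub>R\<^esub> J"
        using k J.zero_closed unfolding set_add_def' by blast
    qed
  qed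
  then show ?thesis
    using d K.a_subset J.a_subset by (simp add: a_setmult_rcos_assoc)
qed

lemma quot_iso_dsumI:
  fixes D :: "('a, 'b) ring_scheme" and M :: "('a set, 'm, 'd) module_scheme"
    and \<psi> :: "'m \<Rightarrow> nat \<Rightarrow> 'a set"
  assumes M: "module (D Quot J) M" and N: "subgroup N (add_monoid M)"
    and range: "\<forall>m\<in>carrier M. \<psi> m \<in> (\<Pi>\<^sub>E i\<in>{1..r}. carrier (D Quot K i))"
    and surj: "\<forall>g\<in>(\<Pi>\<^sub>E i\<in>{1..r}. carrier (D Quot K i)). \<exists>m\<in>carrier M. \<psi> m = g"
    and kernel: "\<forall>m\<in>carrier M. \<forall>m'\<in>carrier M. \<psi> m = \<psi> m' \<longleftrightarrow> m \<ominus>\<^bsub>M\<^esub> m' \<in> N"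
    and add: "\<forall>m\<in>carrier M. \<forall>m'\<in>carrier M.
      \<psi> (m \<oplus>\<^bsub>M\<^esub> m') = (\<lambda>i\<in>{1..r}. \<psi> m i \<oplus>\<^bsub>D Quot K i\<^esub> \<psi> m' i)"
    and smult: "\<forall>d\<in>carrier D. \<forall>m\<in>carrier M.
      \<psi> ((J +>\<^bsub>D\<^esub> d) \<odot>\<^bsub>M\<^esub> m) = (\<lambda>i\<in>{1..r}. (K i +>\<^bsub>D\<^esub> d) \<otimes>\<^bsub>D Quot K i\<^esub> \<psi> m i)"
  shows "quot_iso_dsum D J M N r K"
proof -
  interpret M: module "D Quot J" M
    by (rule M)
  interpret N: abelian_subgroup N M
    using N by (intro abelian_subgroupI3) (auto simp: additive_subgroup_def M.abelian_group_axioms)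
  \<comment> \<open>\<open>\<psi>\<close> is constant on cosets of its kernel \<open>N\<close>, so any representative will do\<close>
  define \<phi> where "\<phi> U = \<psi> (SOME m. m \<in> U)" for U
  have \<phi>: "\<phi> (N +>\<^bsub>M\<^esub> m) = \<psi> m" if m: "m \<in> carrier M" for m
  proof -
    let ?m = "SOME m'. m' \<in> N +>\<^bsub>M\<^esub> m"
    have "?m \<in> N +>\<^bsub>M\<^esub> m"
      using N.a_rcos_self[OF m] by (rule someI)
    then have "?m \<in> carrier M" "?m \<ominus>\<^bsub>M\<^esub> m \<in> N"
      using N.a_elemrcos_carrier N.a_rcos_module_imp m by (auto simp: a_minus_def)
    then show ?thesis
      using kernel m by (simp add: \<phi>_def)
  qed
  have cosets: "A_RCOSETS M N = (\<lambda>m. N +>\<^bsub>M\<^esub> m) ` carrier M"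
    by (auto simp: A_RCOSETS_def RCOSETS_def a_r_coset_def)
  have "inj_on \<phi> (A_RCOSETS M N)"
  proof (rule inj_onI)
    fix U V assume "U \<in> A_RCOSETS M N" "V \<in> A_RCOSETS M N" "\<phi> U = \<phi> V"
    then obtain m m' where m: "m \<in> carrier M" "U = N +>\<^bsub>M\<^esub> m" and m': "m' \<in> carrier M" "V = N +>\<^bsub>M\<^esub> m'"
      and "\<psi> m = \<psi> m'"
      using \<phi> by (auto simp: cosets)
    then have "m \<ominus>\<^bsub>M\<^esub> m' \<in> N"
      using kernel by blast
    then show "U = V"
      using m m' N.a_rcos_module_rev N.a_repr_independence' by (metis a_minus_def)
  qed
  moreover have "\<phi> ` A_RCOSETS M N = (\<Pi>\<^sub>E i\<in>{1..r}. carrier (D Quot K i))"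
    using range surj \<phi> by (force simp: cosets image_comp)
  moreover have "\<phi> (U <+>\<^bsub>M\<^esub> V) = (\<lambda>i\<in>{1..r}. \<phi> U i \<oplus>\<^bsub>D Quot K i\<^esub> \<phi> V i)"
    if "U \<in> A_RCOSETS M N" "V \<in> A_RCOSETS M N" for U V
    using that add \<phi> N.a_rcos_sum by (auto simp: cosets)
  moreover have "\<phi> (N +>\<^bsub>M\<^esub> ((J +>\<^bsub>D\<^esub> d) \<odot>\<^bsub>M\<^esub> m))
      = (\<lambda>i\<in>{1..r}. (K i +>\<^bsub>D\<^esub> d) \<otimes>\<^bsub>D Quot K i\<^esub> \<phi> (N +>\<^bsub>M\<^esub> m) i)"
    if "d \<in> carrier D" "m \<in> carrier M" for d m
  proof -
    have "J +>\<^bsub>D\<^esub> d \<in> carrier (D Quot J)"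
      using that unfolding carrier_FactRing by blast
    then show ?thesis
      using that smult \<phi> by simp
  qed
  ultimately show ?thesis
    unfolding quot_iso_dsum_def bij_betw_def by blast
qed

locale quotient_free_module = cring R + M: module "R Quot J" M
  for R :: "('a, 'b) ring_scheme" (structure) and J and M :: "('a set, 'm, 'd) module_scheme" +
  fixes y :: "nat \<Rightarrow> 'm" and r :: nat and K :: "nat \<Rightarrow> 'a set"
  assumes ideal_J: "ideal J R"
    and basis_y: "M.basis y {1..r}"
    and ideal_K: "i \<in> {1..r} \<Longrightarrow> ideal (K i) R"
    and J_subset_K: "i \<in> {1..r} \<Longrightarrow> J \<subseteq> K i"
begin

sublocale \<pi>: ring_hom_ring R "R Quot J" "(+>) J"
  using ideal_J by (rule ideal.rcos_ring_hom_ring)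

text \<open>The \<open>D\<close>-linear map \<open>M \<rightarrow> \<Oplus>_i D/K i\<close> reducing the \<open>i\<close>-th coordinate, a coset of \<open>J\<close>, modulo \<open>K i\<close>.\<close>

definition reduced_coords :: "'m \<Rightarrow> nat \<Rightarrow> 'a set"
  where "reduced_coords m = (\<lambda>i\<in>{1..r}. K i <+>\<^bsub>R\<^esub> M.coords y {1..r} m i)"

abbreviation lift :: "(nat \<Rightarrow> 'a) \<Rightarrow> 'm"
  where "lift d \<equiv> M.lincomb (\<lambda>i. J +> d i) y {1..r}"

lemma y_closed: "y \<in> {1..r} \<rightarrow> carrier M"
  using basis_y by (simp add: M.basis_def)

lemma rcos_in_carrier: "d \<in> {1..r} \<rightarrow> carrier R \<Longrightarrow> (\<lambda>i. J +> d i) \<in> {1..r} \<rightarrow> carrier (R Quot J)"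
  by (auto simp: carrier_FactRing)

lemma lift_closed: "d \<in> {1..r} \<rightarrow> carrier R \<Longrightarrow> lift d \<in> carrier M"
  using rcos_in_carrier y_closed by blast

lemma exists_lift:
  assumes "m \<in> carrier M"
  shows "\<exists>d\<in>{1..r} \<rightarrow> carrier R. m = lift d"
proof -
  obtain c where c: "c \<in> {1..r} \<rightarrow> carrier (R Quot J)" "m = M.lincomb c y {1..r}"
    using assms basis_y by (auto simp: M.basis_def M.spans_def)
  then have "\<forall>i\<in>{1..r}. \<exists>d\<in>carrier R. c i = J +> d"
    by (auto simp: carrier_FactRing)
  then obtain d where d: "\<forall>i\<in>{1..r}. d i \<in> carrier R \<and> c i = J +> d i"
    by metis
  then have "M.lincomb c y {1..r} = lift d"
    using y_closed by (intro M.lincomb_cong) auto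
  then show ?thesis
    using c d by auto
qed

lemma lift_add:
  assumes d: "d \<in> {1..r} \<rightarrow> carrier R" and d': "d' \<in> {1..r} \<rightarrow> carrier R"
  shows "lift d \<oplus>\<^bsub>M\<^esub> lift d' = lift (\<lambda>i. d i \<oplus> d' i)"
proof -
  have "lift d \<oplus>\<^bsub>M\<^esub> lift d' = M.lincomb (\<lambda>i. (J +> d i) \<oplus>\<^bsub>R Quot J\<^esub> (J +> d' i)) y {1..r}"
    using rcos_in_carrier[OF d] rcos_in_carrier[OF d'] y_closed by (simp add: M.lincomb_add)
  also have "\<dots> = lift (\<lambda>i. d i \<oplus> d' i)"
    using d d' rcos_in_carrier[of "\<lambda>i. d i \<oplus> d' i"] y_closed by (intro M.lincomb_cong) (auto simp: Pi_iff)
  finally show ?thesis .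
qed

lemma lift_diff:
  assumes d: "d \<in> {1..r} \<rightarrow> carrier R" and d': "d' \<in> {1..r} \<rightarrow> carrier R"
  shows "lift d \<ominus>\<^bsub>M\<^esub> lift d' = lift (\<lambda>i. d i \<ominus> d' i)"
proof -
  have minus: "J +> (u \<ominus> v) = (J +> u) \<ominus>\<^bsub>R Quot J\<^esub> (J +> v)" if "u \<in> carrier R" "v \<in> carrier R" for u v
    using that unfolding a_minus_def by simp
  have "lift d \<ominus>\<^bsub>M\<^esub> lift d' = M.lincomb (\<lambda>i. (J +> d i) \<ominus>\<^bsub>R Quot J\<^esub> (J +> d' i)) y {1..r}"
    using rcos_in_carrier[OF d] rcos_in_carrier[OF d'] y_closed by (simp add: M.lincomb_diff)
  also have "\<dots> = lift (\<lambda>i. d i \<ominus> d' i)"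
    using d d' rcos_in_carrier[of "\<lambda>i. d i \<ominus> d' i"] y_closed by (intro M.lincomb_cong) (auto simp: Pi_iff minus)
  finally show ?thesis .
qed

lemma lift_smult:
  assumes e: "e \<in> carrier R" and d: "d \<in> {1..r} \<rightarrow> carrier R"
  shows "(J +> e) \<odot>\<^bsub>M\<^esub> lift d = lift (\<lambda>i. e \<otimes> d i)"
proof -
  have "(J +> e) \<odot>\<^bsub>M\<^esub> lift d = M.lincomb (\<lambda>i. (J +> e) \<otimes>\<^bsub>R Quot J\<^esub> (J +> d i)) y {1..r}"
    using e rcos_in_carrier[OF d] y_closed by (simp add: M.lincomb_smult)
  also have "\<dots> = lift (\<lambda>i. e \<otimes> d i)"
    using e d rcos_in_carrier[of "\<lambda>i. e \<otimes> d i"] y_closed by (intro M.lincomb_cong) (auto simp: Pi_iff)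
  finally show ?thesis .
qed

lemma coords_lift: "d \<in> {1..r} \<rightarrow> carrier R \<Longrightarrow> M.coords y {1..r} (lift d) = (\<lambda>i\<in>{1..r}. J +> d i)"
  using basis_y rcos_in_carrier by (simp add: M.coords_lincomb)

lemma reduced_coords_lift:
  assumes d: "d \<in> {1..r} \<rightarrow> carrier R"
  shows "reduced_coords (lift d) = (\<lambda>i\<in>{1..r}. K i +> d i)"
proof -
  have "M.coords y {1..r} (lift d) = (\<lambda>i\<in>{1..r}. J +> d i)"
    using d by (rule coords_lift)
  moreover have "K i <+>\<^bsub>R\<^esub> (J +> d i) = K i +> d i" if "i \<in> {1..r}" for i
    using that d ideal_J ideal_K J_subset_K by (intro set_add_rcos_of_subset) auto
  ultimately show ?thesis
    by (auto simp: reduced_coords_def intro!: restrict_ext)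
qed

lemma rcos_mem_quot_ideal_iff:
  assumes i: "i \<in> {1..r}" and e: "e \<in> carrier R"
  shows "J +> e \<in> quot_ideal R (K i) J \<longleftrightarrow> e \<in> K i"
proof
  assume "J +> e \<in> quot_ideal R (K i) J"
  then obtain k where k: "k \<in> K i" "J +> e = J +> k"
    by (auto simp: quot_ideal_def)
  interpret K: ideal "K i" R
    using i by (rule ideal_K)
  have "e \<ominus> k \<in> K i"
    using k e J_subset_K[OF i] rcos_eq_iff_minus_mem[OF ideal_J] K.a_Hcarr by blast
  then have "(e \<ominus> k) \<oplus> k \<in> K i"
    using k by simp
  then show "e \<in> K i"
    using e K.a_Hcarr[OF k(1)] by (simp add: a_minus_def a_assoc l_neg)
qed (simp add: quot_ideal_def)

lemma reduced_coords_eq_iff: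
  assumes "m \<in> carrier M" "m' \<in> carrier M"
  shows "reduced_coords m = reduced_coords m'
    \<longleftrightarrow> (\<forall>i\<in>{1..r}. M.coords y {1..r} (m \<ominus>\<^bsub>M\<^esub> m') i \<in> quot_ideal R (K i) J)"
proof -
  obtain d d' where d: "d \<in> {1..r} \<rightarrow> carrier R" "m = lift d"
    and d': "d' \<in> {1..r} \<rightarrow> carrier R" "m' = lift d'"
    using assms exists_lift by metis
  have "(\<lambda>i. d i \<ominus> d' i) \<in> {1..r} \<rightarrow> carrier R"
    using d d' by auto
  then have "M.coords y {1..r} (m \<ominus>\<^bsub>M\<^esub> m') = (\<lambda>i\<in>{1..r}. J +> (d i \<ominus> d' i))"
    unfolding d(2) d'(2) lift_diff[OF d(1) d'(1)] by (rule coords_lift)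
  moreover have "J +> (d i \<ominus> d' i) \<in> quot_ideal R (K i) J \<longleftrightarrow> K i +> d i = K i +> d' i"
    if i: "i \<in> {1..r}" for i
  proof -
    have "d i \<in> carrier R" "d' i \<in> carrier R"
      using i d d' by auto
    then show ?thesis
      using rcos_mem_quot_ideal_iff[OF i, of "d i \<ominus> d' i"] rcos_eq_iff_minus_mem[OF ideal_K[OF i], of "d i" "d' i"]
      by simp
  qed
  moreover have "reduced_coords m = (\<lambda>i\<in>{1..r}. K i +> d i)"
    unfolding d(2) using d(1) by (rule reduced_coords_lift)
  moreover have "reduced_coords m' = (\<lambda>i\<in>{1..r}. K i +> d' i)"
    unfolding d'(2) using d'(1) by (rule reduced_coords_lift)
  ultimately show ?thesis
    by (auto simp: fun_eq_iff restrict_def)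
qed

lemma reduced_coords_add:
  assumes "m \<in> carrier M" "m' \<in> carrier M"
  shows "reduced_coords (m \<oplus>\<^bsub>M\<^esub> m')
    = (\<lambda>i\<in>{1..r}. reduced_coords m i \<oplus>\<^bsub>R Quot K i\<^esub> reduced_coords m' i)"
proof -
  obtain d d' where d: "d \<in> {1..r} \<rightarrow> carrier R" "m = lift d"
    and d': "d' \<in> {1..r} \<rightarrow> carrier R" "m' = lift d'"
    using assms exists_lift by metis
  have "K i +> (d i \<oplus> d' i) = (K i +> d i) \<oplus>\<^bsub>R Quot K i\<^esub> (K i +> d' i)" if i: "i \<in> {1..r}" for i
  proof -
    have "d i \<in> carrier R" "d' i \<in> carrier R"
      using i d d' by auto
    then show ?thesis
      using ideal.a_rcos_sum[OF ideal_K[OF i]] by (simp add: FactRing_def)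
  qed
  moreover have "reduced_coords (m \<oplus>\<^bsub>M\<^esub> m') = (\<lambda>i\<in>{1..r}. K i +> (d i \<oplus> d' i))"
    unfolding d(2) d'(2) lift_add[OF d(1) d'(1)] using d d' by (intro reduced_coords_lift) auto
  moreover have "reduced_coords m = (\<lambda>i\<in>{1..r}. K i +> d i)"
    unfolding d(2) using d(1) by (rule reduced_coords_lift)
  moreover have "reduced_coords m' = (\<lambda>i\<in>{1..r}. K i +> d' i)"
    unfolding d'(2) using d'(1) by (rule reduced_coords_lift)
  ultimately show ?thesis
    by (auto intro!: restrict_ext)
qed

lemma reduced_coords_smult:
  assumes e: "e \<in> carrier R" and "m \<in> carrier M"
  shows "reduced_coords ((J +> e) \<odot>\<^bsub>M\<^esub> m)
    = (\<lambda>i\<in>{1..r}. (K i +> e) \<otimes>\<^bsub>R Quot K i\<^esub> reduced_coords m i)"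
proof -
  obtain d where d: "d \<in> {1..r} \<rightarrow> carrier R" "m = lift d"
    using assms(2) exists_lift by blast
  have "K i +> (e \<otimes> d i) = (K i +> e) \<otimes>\<^bsub>R Quot K i\<^esub> (K i +> d i)" if i: "i \<in> {1..r}" for i
  proof -
    have "d i \<in> carrier R"
      using i d by auto
    then show ?thesis
      using ideal.rcoset_mult_add[OF ideal_K[OF i] e] by (simp add: FactRing_def)
  qed
  moreover have "reduced_coords ((J +> e) \<odot>\<^bsub>M\<^esub> m) = (\<lambda>i\<in>{1..r}. K i +> (e \<otimes> d i))"
    unfolding d(2) lift_smult[OF e d(1)] using d e by (intro reduced_coords_lift) auto
  moreover have "reduced_coords m = (\<lambda>i\<in>{1..r}. K i +> d i)"
    unfolding d(2) using d(1) by (rule reduced_coords_lift)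
  ultimately show ?thesis
    by (auto intro!: restrict_ext)
qed

lemma quot_iso_dsum_if_coordinatewise:
  assumes N: "subgroup N (add_monoid M)"
    and coordinatewise: "\<And>c. c \<in> {1..r} \<rightarrow> carrier (R Quot J) \<Longrightarrow>
      M.lincomb c y {1..r} \<in> N \<longleftrightarrow> (\<forall>i\<in>{1..r}. c i \<in> quot_ideal R (K i) J)"
  shows "quot_iso_dsum R J M N r K"
proof (rule quot_iso_dsumI[where \<psi> = reduced_coords, OF M.module_axioms N]; intro ballI)
  fix m assume "m \<in> carrier M"
  then obtain d where d: "d \<in> {1..r} \<rightarrow> carrier R" "m = lift d"
    using exists_lift by blast
  then have "reduced_coords m = (\<lambda>i\<in>{1..r}. K i +> d i)"
    using reduced_coords_lift by blast
  then show "reduced_coords m \<in> (\<Pi>\<^sub>E i\<in>{1..r}. carrier (R Quot K i))"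
    using d by (auto simp: carrier_FactRing)
next
  fix g assume g: "g \<in> (\<Pi>\<^sub>E i\<in>{1..r}. carrier (R Quot K i))"
  then have "\<forall>i\<in>{1..r}. \<exists>d\<in>carrier R. g i = K i +> d"
    by (auto simp: carrier_FactRing)
  then obtain d where d: "\<forall>i\<in>{1..r}. d i \<in> carrier R \<and> g i = K i +> d i"
    by metis
  moreover have "reduced_coords (lift d) = (\<lambda>i\<in>{1..r}. K i +> d i)"
    using d by (intro reduced_coords_lift) auto
  ultimately have "reduced_coords (lift d) = g"
    using g by (auto simp: PiE_iff extensional_def fun_eq_iff)
  moreover have "lift d \<in> carrier M"
    using d by (intro lift_closed) auto
  ultimately show "\<exists>m\<in>carrier M. reduced_coords m = g"
    by blast
next
  fix m m' assume m: "m \<in> carrier M" "m' \<in> carrier M"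
  then have "M.coords y {1..r} (m \<ominus>\<^bsub>M\<^esub> m') \<in> {1..r} \<rightarrow>\<^sub>E carrier (R Quot J)"
    and "M.lincomb (M.coords y {1..r} (m \<ominus>\<^bsub>M\<^esub> m')) y {1..r} = m \<ominus>\<^bsub>M\<^esub> m'"
    using M.coords_in_PiE[OF _ basis_y] by auto
  then show "reduced_coords m = reduced_coords m' \<longleftrightarrow> m \<ominus>\<^bsub>M\<^esub> m' \<in> N"
    using coordinatewise reduced_coords_eq_iff[OF m] by (metis PiE_restrict restrict_PiE)
next
  fix m m' assume "m \<in> carrier M" "m' \<in> carrier M"
  then show "reduced_coords (m \<oplus>\<^bsub>M\<^esub> m')
      = (\<lambda>i\<in>{1..r}. reduced_coords m i \<oplus>\<^bsub>R Quot K i\<^esub> reduced_coords m' i)"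
    by (rule reduced_coords_add)
next
  fix e m assume "e \<in> carrier R" "m \<in> carrier M"
  then show "reduced_coords ((J +> e) \<odot>\<^bsub>M\<^esub> m)
      = (\<lambda>i\<in>{1..r}. (K i +> e) \<otimes>\<^bsub>R Quot K i\<^esub> reduced_coords m i)"
    by (rule reduced_coords_smult)
qed

end

section \<open>The ring \<open>D/(p^n)\<close>\<close>

locale prime_power_quotient = principal_domain +
  fixes p :: 'a and n :: nat
  assumes prime_closed [simp]: "p \<in> carrier R" and prime: "ring_prime p" and exponent_pos: "1 \<le> n"
begin

abbreviation J :: "'a set"
  where "J \<equiv> PIdl (p [^] n)"

lemma ideal_J: "ideal J R"
  by (simp add: cgenideal_ideal)

sublocale Q: cring "R Quot J"
  using ideal_J is_cring by (rule ideal.quotient_is_cring)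

sublocale \<pi>: ring_hom_ring R "R Quot J" "(+>) J"
  using ideal_J by (rule ideal.rcos_ring_hom_ring)

lemma rcos_pow: "J +> p [^] (k::nat) = (J +> p) [^]\<^bsub>R Quot J\<^esub> k"
  by (simp add: \<pi>.hom_nat_pow)

lemma prime_pow_nonzero: "p [^] (k::nat) \<noteq> \<zero>"
  using prime by (induction k) (auto simp: ring_prime_def integral_iff)

lemma rcos_eq_zero_iff:
  assumes "d \<in> carrier R"
  shows "J +> d = \<zero>\<^bsub>R Quot J\<^esub> \<longleftrightarrow> d \<in> J"
proof -
  have "\<zero>\<^bsub>R Quot J\<^esub> = J"
    unfolding FactRing_def by (simp only: ring_record_simps)
  then show ?thesis
    using assms ideal.rcos_const_imp_mem[OF ideal_J] a_rcos_zero[OF ideal_J] by auto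
qed

lemma prime_not_unit: "p \<notin> Units R"
  using prime unfolding ring_prime_def prime_def by auto

lemma PIdl_pow_antimono: "k \<le> m \<Longrightarrow> PIdl (p [^] m) \<subseteq> PIdl (p [^] (k::nat))"
proof -
  assume "k \<le> m"
  then have "p [^] m = p [^] k \<otimes> p [^] (m - k)"
    by (simp add: nat_pow_mult)
  then have "p [^] k divides p [^] m"
    by (auto simp: factor_def)
  then show ?thesis
    using to_contain_is_to_divide[of "p [^] k" "p [^] m"] by simp
qed

lemma rcos_pow_divides_iff:
  assumes k: "k \<le> n" and d: "d \<in> carrier R"
  shows "(J +> p) [^]\<^bsub>R Quot J\<^esub> k divides\<^bsub>R Quot J\<^esub> (J +> d) \<longleftrightarrow> d \<in> PIdl (p [^] k)"
  unfolding rcos_pow[symmetric]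
proof
  interpret K: ideal "PIdl (p [^] k)" R
    by (simp add: cgenideal_ideal)
  assume "(J +> p [^] k) divides\<^bsub>R Quot J\<^esub> (J +> d)"
  then obtain s where s: "s \<in> carrier R" "J +> d = (J +> p [^] k) \<otimes>\<^bsub>R Quot J\<^esub> (J +> s)"
    by (auto simp: factor_def carrier_FactRing)
  then have "J +> d = J +> (p [^] k \<otimes> s)"
    by simp
  moreover have "p [^] k \<otimes> s \<in> carrier R"
    using s by simp
  ultimately have "d \<ominus> p [^] k \<otimes> s \<in> J"
    using rcos_eq_iff_minus_mem[OF ideal_J d] by blast
  then have "d \<ominus> p [^] k \<otimes> s \<in> PIdl (p [^] k)"
    using PIdl_pow_antimono[OF k] by blast
  moreover have "p [^] k \<otimes> s \<in> PIdl (p [^] k)"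
    using s by (simp add: K.I_r_closed cgenideal_self)
  ultimately have "(d \<ominus> p [^] k \<otimes> s) \<oplus> p [^] k \<otimes> s \<in> PIdl (p [^] k)"
    by simp
  then show "d \<in> PIdl (p [^] k)"
    using d s by (simp add: a_minus_def a_assoc l_neg)
next
  assume "d \<in> PIdl (p [^] k)"
  then obtain s where s: "s \<in> carrier R" "d = s \<otimes> p [^] k"
    by (auto simp: cgenideal_def)
  then have "J +> d = (J +> p [^] k) \<otimes>\<^bsub>R Quot J\<^esub> (J +> s)"
    by (simp add: Q.m_comm)
  then show "(J +> p [^] k) divides\<^bsub>R Quot J\<^esub> (J +> d)"
    using s by (auto simp: factor_def)
qed

lemma quot_ideal_pow:
  assumes "k \<le> n"
  shows "quot_ideal R (PIdl (p [^] k)) J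
    = {c \<in> carrier (R Quot J). (J +> p) [^]\<^bsub>R Quot J\<^esub> k divides\<^bsub>R Quot J\<^esub> c}"
proof (intro equalityI subsetI)
  fix c assume "c \<in> quot_ideal R (PIdl (p [^] k)) J"
  then obtain d where d: "d \<in> PIdl (p [^] k)" "c = J +> d"
    by (auto simp: quot_ideal_def)
  then have "d \<in> carrier R"
    by (auto simp: cgenideal_def)
  then show "c \<in> {c \<in> carrier (R Quot J). (J +> p) [^]\<^bsub>R Quot J\<^esub> k divides\<^bsub>R Quot J\<^esub> c}"
    using d rcos_pow_divides_iff[OF assms] by (auto simp: carrier_FactRing)
next
  fix c assume "c \<in> {c \<in> carrier (R Quot J). (J +> p) [^]\<^bsub>R Quot J\<^esub> k divides\<^bsub>R Quot J\<^esub> c}"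
  then obtain d where "d \<in> carrier R" "c = J +> d" "(J +> p) [^]\<^bsub>R Quot J\<^esub> k divides\<^bsub>R Quot J\<^esub> c"
    by (auto simp: carrier_FactRing)
  then show "c \<in> quot_ideal R (PIdl (p [^] k)) J"
    using rcos_pow_divides_iff[OF assms] by (auto simp: quot_ideal_def)
qed

lemma bezout_prime_pow:
  assumes d: "d \<in> carrier R" "d \<notin> PIdl p"
  shows "\<exists>u\<in>carrier R. \<exists>v\<in>carrier R. \<one> = u \<otimes> p [^] (k::nat) \<oplus> v \<otimes> d"
proof (induction k)
  case 0
  have "\<one> = \<one> \<otimes> p [^] (0::nat) \<oplus> \<zero> \<otimes> d"
    using d by simp
  then show ?case
    by blast
next
  case (Suc k)
  \<comment> \<open>\<open>PIdl p\<close> is maximal, so \<open>PIdl p + PIdl d\<close> is the whole ring\<close>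
  have "\<one> \<in> PIdl p <+>\<^bsub>R\<^esub> PIdl d"
  proof -
    let ?I = "PIdl p <+>\<^bsub>R\<^esub> PIdl d"
    have max: "maximalideal (PIdl p) R"
      using irreducible_imp_maximalideal primeness_condition prime by simp
    have I: "ideal ?I R"
      using d by (simp add: add_ideals cgenideal_ideal)
    have "x \<in> ?I" if "x \<in> PIdl p \<or> x \<in> PIdl d" for x
    proof -
      have "\<zero> \<in> PIdl p" "\<zero> \<in> PIdl d"
        using d by (auto simp: cgenideal_def intro!: exI[of _ \<zero>])
      moreover have "x \<in> carrier R"
        using that d by (auto simp: cgenideal_def)
      then have "x = x \<oplus> \<zero>" "x = \<zero> \<oplus> x"
        by simp_all
      ultimately show ?thesis
        using that unfolding set_add_def' by blast
    qed
    then have "PIdl p \<subseteq> ?I" "d \<in> ?I"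
      using cgenideal_self[OF d(1)] by auto
    then have "?I = carrier R"
      using maximalideal.I_maximal[OF max I] additive_subgroup.a_subset[OF ideal.axioms(1)[OF I]] d(2)
      by blast
    then show ?thesis
      by simp
  qed
  then obtain u' v' where uv': "u' \<in> carrier R" "v' \<in> carrier R" "\<one> = u' \<otimes> p \<oplus> v' \<otimes> d"
    unfolding set_add_def' cgenideal_def by blast
  obtain u v where uv: "u \<in> carrier R" "v \<in> carrier R" "\<one> = u \<otimes> p [^] k \<oplus> v \<otimes> d"
    using Suc by blast
  have pk: "p [^] k \<in> carrier R"
    by simp
  have "\<one> = (u \<otimes> p [^] k) \<otimes> \<one> \<oplus> v \<otimes> d"
    using uv(1,2) pk by (simp add: uv(3)[symmetric])
  also have "\<dots> = (u \<otimes> p [^] k) \<otimes> (u' \<otimes> p \<oplus> v' \<otimes> d) \<oplus> v \<otimes> d"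
    by (simp only: uv'(3)[symmetric])
  also have "\<dots> = (u \<otimes> u') \<otimes> (p [^] k \<otimes> p) \<oplus> (u \<otimes> p [^] k \<otimes> v' \<oplus> v) \<otimes> d"
    using uv(1,2) uv'(1,2) pk d(1) prime_closed by algebra
  finally have "\<one> = (u \<otimes> u') \<otimes> p [^] Suc k \<oplus> (u \<otimes> p [^] k \<otimes> v' \<oplus> v) \<otimes> d"
    by simp
  then show ?case
    using uv uv' pk by blast
qed

lemma rcos_prime_not_unit: "J +> p \<notin> Units (R Quot J)"
proof
  assume "J +> p \<in> Units (R Quot J)"
  then have "(J +> p) [^]\<^bsub>R Quot J\<^esub> (1::nat) divides\<^bsub>R Quot J\<^esub> (J +> \<one>)"
    using Q.divides_one rcos_pow[of 1] by simp
  then have "\<one> \<in> PIdl (p [^] (1::nat))"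
    using rcos_pow_divides_iff[of 1 \<one>] exponent_pos by simp
  then obtain s where "s \<in> carrier R" "\<one> = s \<otimes> p"
    by (auto simp: cgenideal_def)
  then have "p \<in> Units R"
    using m_comm[of s p] unfolding Units_def by force
  then show False
    using prime_not_unit by simp
qed

lemma rcos_unit_or_divisible:
  assumes c: "c \<in> carrier (R Quot J)"
  shows "c \<in> Units (R Quot J) \<or> (J +> p) divides\<^bsub>R Quot J\<^esub> c"
proof -
  obtain d where d: "d \<in> carrier R" "c = J +> d"
    using c by (auto simp: carrier_FactRing)
  show ?thesis
  proof (cases "d \<in> PIdl p")
    case True
    then show ?thesis
      using d rcos_pow_divides_iff[of 1 d] exponent_pos rcos_pow[of 1] by simp
  next
    case False
    then obtain u v where uv: "u \<in> carrier R" "v \<in> carrier R" "\<one> = u \<otimes> p [^] n \<oplus> v \<otimes> d"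
      using bezout_prime_pow d by blast
    have "J +> p [^] n = \<zero>\<^bsub>R Quot J\<^esub>"
      using rcos_eq_zero_iff cgenideal_self by simp
    have "\<one>\<^bsub>R Quot J\<^esub> = J +> (u \<otimes> p [^] n \<oplus> v \<otimes> d)"
      by (simp only: uv(3)[symmetric] \<pi>.hom_one)
    also have "\<dots> = (J +> u) \<otimes>\<^bsub>R Quot J\<^esub> (J +> p [^] n) \<oplus>\<^bsub>R Quot J\<^esub> (J +> v) \<otimes>\<^bsub>R Quot J\<^esub> (J +> d)"
      using uv d by simp
    also have "\<dots> = (J +> v) \<otimes>\<^bsub>R Quot J\<^esub> c"
      using \<open>J +> p [^] n = \<zero>\<^bsub>R Quot J\<^esub>\<close> uv d by simp
    finally have inv: "(J +> v) \<otimes>\<^bsub>R Quot J\<^esub> c = \<one>\<^bsub>R Quot J\<^esub>" ..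
    have v: "J +> v \<in> carrier (R Quot J)"
      using uv by simp
    then have "c \<otimes>\<^bsub>R Quot J\<^esub> (J +> v) = \<one>\<^bsub>R Quot J\<^esub>"
      using inv c Q.m_comm by simp
    then show ?thesis
      using inv c v unfolding Units_def by blast
  qed
qed

lemma rcos_annihilator_pow:
  assumes k: "k \<le> n" and c: "c \<in> carrier (R Quot J)"
    and ann: "(J +> p) [^]\<^bsub>R Quot J\<^esub> k \<otimes>\<^bsub>R Quot J\<^esub> c = \<zero>\<^bsub>R Quot J\<^esub>"
  shows "(J +> p) [^]\<^bsub>R Quot J\<^esub> (n - k) divides\<^bsub>R Quot J\<^esub> c"
proof -
  obtain d where d: "d \<in> carrier R" "c = J +> d" "J +> (p [^] k \<otimes> d) = \<zero>\<^bsub>R Quot J\<^esub>"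
    using c ann unfolding rcos_pow[symmetric] by (auto simp: carrier_FactRing)
  then obtain u where u: "u \<in> carrier R" "p [^] k \<otimes> d = u \<otimes> p [^] n"
    using rcos_eq_zero_iff by (auto simp: cgenideal_def)
  have "p [^] k \<otimes> p [^] (n - k) = p [^] n"
    using k by (simp add: nat_pow_mult)
  then have "p [^] k \<otimes> d = p [^] k \<otimes> (u \<otimes> p [^] (n - k))"
    using u by (simp add: m_lcomm)
  then have "d = u \<otimes> p [^] (n - k)"
    using d u prime_pow_nonzero by (simp add: m_lcancel)
  then show ?thesis
    using rcos_pow_divides_iff[of "n - k" d] d u by (auto simp: cgenideal_def)
qed

lemma chain_ring_quotient: "chain_ring (R Quot J) (J +> p) n"
proof (intro chain_ring.intro chain_ring_axioms.intro)
  show "cring (R Quot J)"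
    by (rule Q.is_cring)
  show "J +> p \<in> carrier (R Quot J)"
    unfolding carrier_FactRing by (rule imageI) (rule prime_closed)
  show "(J +> p) [^]\<^bsub>R Quot J\<^esub> n = \<zero>\<^bsub>R Quot J\<^esub>"
    unfolding rcos_pow[symmetric] using rcos_eq_zero_iff cgenideal_self by simp
qed (use rcos_prime_not_unit rcos_unit_or_divisible rcos_annihilator_pow in auto)

lemma lin_span_coordinatewise:
  assumes M: "chain_ring_module (R Quot J) (J +> p) n M"
    and y: "module.basis (R Quot J) M y {1..r}" and jr: "j \<le> r"
    and ni: "\<forall>i\<in>{1..j}. ni i \<le> n"
    and x: "\<forall>i\<in>{1..j}. x i = (J +> p) [^]\<^bsub>R Quot J\<^esub> (n - ni i) \<odot>\<^bsub>M\<^esub> y i"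
    and c: "c \<in> {1..r} \<rightarrow> carrier (R Quot J)"
  shows "module.lincomb M c y {1..r} \<in> lin_span (R Quot J) M x j
    \<longleftrightarrow> (\<forall>i\<in>{1..r}. c i \<in> quot_ideal R (PIdl (p [^] (n - (if i \<le> j then ni i else 0)))) J)"
proof -
  interpret M: chain_ring_module "R Quot J" "J +> p" n M
    by (rule M)
  have "M.lincomb c y {1..r} \<in> lin_span (R Quot J) M x j
      \<longleftrightarrow> (\<forall>i\<in>{1..j}. (J +> p) [^]\<^bsub>R Quot J\<^esub> (n - ni i) divides\<^bsub>R Quot J\<^esub> c i)
        \<and> (\<forall>i\<in>{j<..r}. c i = \<zero>\<^bsub>R Quot J\<^esub>)"
    using M.lincomb_mem_lin_span_iff[OF y jr _ x c] by simp
  also have "\<dots> \<longleftrightarrow> (\<forall>i\<in>{1..r}. c i \<in> quot_ideal R (PIdl (p [^] (n - (if i \<le> j then ni i else 0)))) J)"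
    using c jr ni quot_ideal_pow M.nilpotent_pow_divides_iff by (auto simp: Pi_iff)
  finally show ?thesis .
qed

end

theorem lemma11:
  fixes D :: "('a, 'b) ring_scheme" and \<alpha> :: 'a and n j r :: nat
    and M :: "('a set, 'm, 'd) module_scheme" and e x :: "nat \<Rightarrow> 'm" and ni :: "nat \<Rightarrow> nat"
  assumes "principal_domain D"
    and "\<alpha> \<in> carrier D" and "ring_prime\<^bsub>D\<^esub> \<alpha>"
    and "n \<ge> 1"
    and "1 \<le> j" and "j \<le> r"
    and "module (Dbar D \<alpha> n) M"
    and "is_basis (Dbar D \<alpha> n) M e r"
    and "\<forall>i\<in>{1..j}. x i \<in> carrier M"
    and "sum_is_direct (Dbar D \<alpha> n) M x j"
    and "\<forall>i\<in>{1..j}. ni i \<le> n"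
    and "\<forall>i\<in>{1..j}. Ann (Dbar D \<alpha> n) M (x i)
            = quot_ideal D (PIdl\<^bsub>D\<^esub> (\<alpha> [^]\<^bsub>D\<^esub> ni i)) (PIdl\<^bsub>D\<^esub> (\<alpha> [^]\<^bsub>D\<^esub> n))"
    and "\<forall>i\<in>{1..j}. Ann (Dbar D \<alpha> n) M (x i) \<noteq> carrier (Dbar D \<alpha> n)"
  shows "quot_iso_dsum D (PIdl\<^bsub>D\<^esub> (\<alpha> [^]\<^bsub>D\<^esub> n)) M (lin_span (Dbar D \<alpha> n) M x j) r
           (\<lambda>i. PIdl\<^bsub>D\<^esub> (\<alpha> [^]\<^bsub>D\<^esub> (n - (if i \<le> j then ni i else 0))))"
proof -
  interpret D: prime_power_quotient D \<alpha> n
    using assms(1-4) by (intro prime_power_quotient.intro prime_power_quotient_axioms.intro) auto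
  let ?Q = "D Quot D.J" and ?a = "D.J +>\<^bsub>D\<^esub> \<alpha>"
  interpret M: chain_ring_module ?Q ?a n M
    using D.chain_ring_quotient assms(7) by (simp add: chain_ring_module_def Dbar_def)
  have ann: "\<forall>i\<in>{1..j}. Ann ?Q M (x i) = {c \<in> carrier ?Q. ?a [^]\<^bsub>?Q\<^esub> ni i divides\<^bsub>?Q\<^esub> c}"
    using assms(11,12) D.quot_ideal_pow by (simp add: Dbar_def)
  have "ni i \<noteq> 0" if i: "i \<in> {1..j}" for i
  proof
    assume "ni i = 0"
    then have "Ann ?Q M (x i) = carrier ?Q"
      using ann i D.Q.one_divides by auto
    then show False
      using assms(13) i by (simp add: Dbar_def)
  qed
  then have ni: "\<forall>i\<in>{1..j}. 1 \<le> ni i \<and> ni i \<le> n"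
    using assms(11) by (auto simp: Suc_le_eq)
  have e: "M.basis e {1..r}"
    using assms(8) by (simp add: Dbar_def M.is_basis_iff_basis)
  have x: "x \<in> {1..j} \<rightarrow> carrier M" and direct: "sum_is_direct ?Q M x j"
    using assms(9,10) by (auto simp: Dbar_def)
  obtain y where y: "M.basis y {1..r}" and x_y: "\<forall>i\<in>{1..j}. x i = ?a [^]\<^bsub>?Q\<^esub> (n - ni i) \<odot>\<^bsub>M\<^esub> y i"
    using M.adapted_basis_exists[OF e assms(6) x direct ni ann] by blast
  define K where "K i = PIdl\<^bsub>D\<^esub> (\<alpha> [^]\<^bsub>D\<^esub> (n - (if i \<le> j then ni i else 0)))" for i
  interpret F: quotient_free_module D D.J M y r K
    using D.ideal_J y D.PIdl_pow_antimono
    by (intro quotient_free_module.intro quotient_free_module_axioms.intro D.is_cring M.module_axioms)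
      (auto simp: K_def D.cgenideal_ideal)
  have "M.lincomb c y {1..r} \<in> lin_span ?Q M x j \<longleftrightarrow> (\<forall>i\<in>{1..r}. c i \<in> quot_ideal D (K i) D.J)"
    if "c \<in> {1..r} \<rightarrow> carrier ?Q" for c
    using D.lin_span_coordinatewise[OF M.chain_ring_module_axioms y assms(6,11) x_y that] by (simp add: K_def)
  then show ?thesis
    using F.quot_iso_dsum_if_coordinatewise M.lin_span_subgroup[OF x]
    unfolding K_def Dbar_def by blast
qed

end
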